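(* Let $s>2$, let $\gamma$ be a fixed constant (the ratio of specific heats, typically $1<\gamma<3$), and let $\mathbb{T}=\mathbb{R}/2\pi\mathbb{Z}$. Consider the two-dimensional compressible gas dynamics system for $U=(\rho,u,v,h)$ on $\mathbb{T}^2$: \begin{align*} \rho_t +u\rho_x+v\rho_y+\rho(u_x+v_y)&=0, \\ u_t +uu_x+ vu_y+ h_x+ \tfrac{h}{\rho}\rho_x&=0, \\ v_t +uv_x+ vv_y+ h_y+ \tfrac{h}{\rho}\rho_y&=0, \\ h_t+uh_x+ vh_y+(\gamma -1) h(u_x+v_y)&=0. \end{align*} Then the data-to-solution map $U(0)\mapsto U(t)$ for this system is not uniformly continuous from any bounded subset of $(H^s(\mathbb{T}^2))^4$ into $C([0,T];(H^s(\mathbb{T}^2))^4)$.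
   Context: Here $\rho$ is the density, $(u,v)$ the velocity, and $h=p/\rho$ (with $p$ the pressure). Solutions are classical solutions taking values in a compact subset of the state space $G=\{(\rho,u,v,h):\rho>0,\ h>0\}$, where the system is symmetrizable hyperbolic; for $s>2$ the Cauchy problem is locally well posed in $(H^s(\mathbb{T}^2))^4$, and $T>0$ denotes a time of existence of the solutions considered. The Sobolev norm is $\|f\|_s^2=\langle \Lambda^s f,\Lambda^s f\rangle$ with $\Lambda^s=(1-\Delta)^{s/2}$ and $\langle\cdot,\cdot\rangle$ the $L^2(\mathbb{T}^2)$ inner product. *)

theory Defs
  imports "HOL-Analysis.Analysis"
begin

text \<open>Space-time scalar fields: functions of (t,x,y); spatial fields: functions of (x,y),
  2pi-periodic in x and y, i.e. functions on the torus T^2.\<close>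

type_synonym sfun = "real \<times> real \<times> real \<Rightarrow> real"
type_synonym xfun = "real \<times> real \<Rightarrow> real"
type_synonym state = "xfun \<times> xfun \<times> xfun \<times> xfun"

definition fcoef :: "xfun \<Rightarrow> int \<times> int \<Rightarrow> complex" where
  "fcoef g k = integral (cbox (0,0) (2*pi, 2*pi))
      (\<lambda>(x,y). complex_of_real (g (x,y)) * cis (- (of_int (fst k) * x + of_int (snd k) * y)))
      / complex_of_real (4 * pi^2)"

definition sob_weight :: "real \<Rightarrow> int \<times> int \<Rightarrow> real" where
  "sob_weight s k = (1 + (of_int (fst k))^2 + (of_int (snd k))^2) powr s"

text \<open>g in H^s(T^2): the Fourier multiplier Lambda^s g = (1-Delta)^(s/2) g lies in L^2.\<close>
definition in_Hs :: "real \<Rightarrow> xfun \<Rightarrow> bool" where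
  "in_Hs s g \<longleftrightarrow> (\<lambda>k. sob_weight s k * (cmod (fcoef g k))^2) summable_on UNIV"

text \<open>Squared Sobolev norm <Lambda^s g, Lambda^s g> (L^2 inner product on T^2, via Parseval).\<close>
definition Hs_sq :: "real \<Rightarrow> xfun \<Rightarrow> real" where
  "Hs_sq s g = 4 * pi^2 * (\<Sum>\<^sub>\<infinity>k. sob_weight s k * (cmod (fcoef g k))^2)"

definition Hs4 :: "real \<Rightarrow> state \<Rightarrow> real" where
  "Hs4 s U = (case U of (a,b,c,d) \<Rightarrow> sqrt (Hs_sq s a + Hs_sq s b + Hs_sq s c + Hs_sq s d))"

definition in_Hs4 :: "real \<Rightarrow> state \<Rightarrow> bool" where
  "in_Hs4 s U = (case U of (a,b,c,d) \<Rightarrow> in_Hs s a \<and> in_Hs s b \<and> in_Hs s c \<and> in_Hs s d)"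

definition sub4 :: "state \<Rightarrow> state \<Rightarrow> state" where
  "sub4 U V = (case U of (a,b,c,d) \<Rightarrow> case V of (a',b',c',d') \<Rightarrow>
      (\<lambda>p. a p - a' p, \<lambda>p. b p - b' p, \<lambda>p. c p - c' p, \<lambda>p. d p - d' p))"

definition slice :: "sfun \<Rightarrow> real \<Rightarrow> xfun" where
  "slice f t = (\<lambda>(x,y). f (t,x,y))"

definition state_at :: "sfun \<times> sfun \<times> sfun \<times> sfun \<Rightarrow> real \<Rightarrow> state" where
  "state_at U t = (case U of (r,a,b,c) \<Rightarrow> (slice r t, slice a t, slice b t, slice c t))"

definition pd3 :: "(real \<times> real \<times> real) set \<Rightarrow> sfun \<Rightarrow> sfun \<Rightarrow> sfun \<Rightarrow> sfun \<Rightarrow> bool" where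
  "pd3 S f ft fx fy \<longleftrightarrow> continuous_on S ft \<and> continuous_on S fx \<and> continuous_on S fy \<and>
     (\<forall>p\<in>S. (f has_derivative (\<lambda>(a,b,c). ft p * a + fx p * b + fy p * c)) (at p within S))"

definition periodic2 :: "real \<Rightarrow> sfun \<Rightarrow> bool" where
  "periodic2 T f \<longleftrightarrow> (\<forall>t\<in>{0..T}. \<forall>x y. f (t, x + 2*pi, y) = f (t,x,y) \<and> f (t, x, y + 2*pi) = f (t,x,y))"

definition G_space :: "(real \<times> real \<times> real \<times> real) set" where
  "G_space = {(r,a,b,c). r > 0 \<and> c > 0}"

definition gas_sol :: "real \<Rightarrow> real \<Rightarrow> real \<Rightarrow> sfun \<times> sfun \<times> sfun \<times> sfun \<Rightarrow> bool" where
  "gas_sol s \<gamma> T U \<longleftrightarrow> (case U of (\<rho>,u,v,h) \<Rightarrow>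
     (let S = {0..T} \<times> (UNIV :: (real \<times> real) set) in
       periodic2 T \<rho> \<and> periodic2 T u \<and> periodic2 T v \<and> periodic2 T h \<and>
       (\<exists>\<rho>t \<rho>x \<rho>y ut ux uy vt vx vy ht hx hy.
          pd3 S \<rho> \<rho>t \<rho>x \<rho>y \<and> pd3 S u ut ux uy \<and> pd3 S v vt vx vy \<and> pd3 S h ht hx hy \<and>
          (\<forall>p\<in>S.
             \<rho>t p + u p * \<rho>x p + v p * \<rho>y p + \<rho> p * (ux p + vy p) = 0 \<and>
             ut p + u p * ux p + v p * uy p + hx p + h p / \<rho> p * \<rho>x p = 0 \<and>
             vt p + u p * vx p + v p * vy p + hy p + h p / \<rho> p * \<rho>y p = 0 \<and>
             ht p + u p * hx p + v p * hy p + (\<gamma> - 1) * h p * (ux p + vy p) = 0)) \<and>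
       (\<exists>K. compact K \<and> K \<subseteq> G_space \<and> (\<forall>p\<in>S. (\<rho> p, u p, v p, h p) \<in> K)) \<and>
       (\<forall>t\<in>{0..T}. in_Hs4 s (state_at U t)) \<and>
       (\<forall>t\<in>{0..T}. \<forall>e>0. \<exists>d>0. \<forall>t'\<in>{0..T}. \<bar>t' - t\<bar> < d \<longrightarrow>
           Hs4 s (sub4 (state_at U t') (state_at U t)) < e)))"

end

theory Submission
  imports Defs
begin

text \<open>The system has the explicit shear-wave solutions \<open>\<rho> = h = 1\<close>, \<open>u = c\<close>,
  \<open>v = e sin (n (x - c t))\<close>, where \<open>e\<close> is chosen so that \<open>v\<close> has unit \<open>H\<^sup>s\<close> norm. The waves with
  speeds \<open>0\<close> and \<open>\<pi>/n\<close> differ initially only in the constant \<open>u\<close>, by \<open>2\<pi>\<^sup>2/n\<close> in \<open>H\<^sup>s\<close>; at time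
  \<open>1\<close> their \<open>v\<close> components are in antiphase, so they are at distance at least \<open>2\<surd>2\<pi>\<close>.\<close>

lemma integral_cis_multiple:
  fixes j :: int
  shows "integral {0..2*pi} (\<lambda>x. cis (of_int j * x)) = (if j = 0 then 2*pi else 0)"
proof (cases "j = 0")
  case True
  then show ?thesis by (simp add: scaleR_conv_of_real)
next
  case False
  define F where "F x = cis (of_int j * x) / (\<i> * of_int j)" for x
  have "(F has_vector_derivative cis (of_int j * x)) (at x within {0..2*pi})" for x
    unfolding F_def has_vector_derivative_def
    by (rule derivative_eq_intros refl)+ (use False in \<open>auto simp: field_simps scaleR_conv_of_real\<close>)
  then have "((\<lambda>x. cis (of_int j * x)) has_integral (F (2*pi) - F 0)) {0..2*pi}"
    by (intro fundamental_theorem_of_calculus) auto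
  moreover have "cis (of_int j * (2*pi)) = 1"
    using cis_multiple_2pi[of "of_int j"] by (simp add: mult.commute)
  ultimately show ?thesis
    using False by (simp add: F_def integral_unique)
qed

lemma integral_cis_torus:
  fixes j l :: int
  shows "integral (cbox (0,0) (2*pi,2*pi)) (\<lambda>(x,y). cis (of_int j * x + of_int l * y))
     = (if j = 0 \<and> l = 0 then complex_of_real (4*pi^2) else 0)"
proof -
  have "continuous_on (cbox (0,0) (2*pi,2*pi)) (\<lambda>(x::real,y::real). cis (of_int j * x + of_int l * y))"
    by (auto intro!: continuous_intros simp: case_prod_unfold)
  then have "integral (cbox (0,0) (2*pi,2*pi)) (\<lambda>(x,y). cis (of_int j * x + of_int l * y))
      = integral {0..2*pi} (\<lambda>x. cis (of_int j * x) * integral {0..2*pi} (\<lambda>y. cis (of_int l * y)))"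
    by (simp add: integral_prod_continuous cis_mult[symmetric] integral_mult_right)
  also have "\<dots> = integral {0..2*pi} (\<lambda>x. cis (of_int j * x)) * integral {0..2*pi} (\<lambda>y. cis (of_int l * y))"
    by (simp add: integral_mult_left)
  finally show ?thesis
    by (simp add: integral_cis_multiple power2_eq_square)
qed

lemma powr_times_square_powr_neg_half:
  fixes x :: real
  assumes "x > 0"
  shows "x powr s * (x powr (- s / 2))^2 = 1"
proof -
  have "x powr s * (x powr (- s / 2))^2 = x powr (s + (- s / 2 + - s / 2))"
    unfolding power2_eq_square powr_add by (rule refl)
  also have "\<dots> = 1"
    using assms by simp
  finally show ?thesis .
qed

definition trig :: "nat \<Rightarrow> real \<Rightarrow> real \<Rightarrow> real \<Rightarrow> xfun" where
  "trig n A B C = (\<lambda>(x,y). A + B * cos (real n * x) + C * sin (real n * x))"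

lemma trig_times_cis:
  fixes k1 k2 :: int
  shows "complex_of_real (trig n A B C (x,y)) * cis (- (of_int k1 * x + of_int k2 * y))
     = complex_of_real A * cis (of_int (-k1) * x + of_int (-k2) * y)
     + Complex (B/2) (-C/2) * cis (of_int (int n - k1) * x + of_int (-k2) * y)
     + Complex (B/2) (C/2) * cis (of_int (- int n - k1) * x + of_int (-k2) * y)"
proof -
  have "complex_of_real (trig n A B C (x,y)) =
      complex_of_real A + Complex (B/2) (-C/2) * cis (real n * x) + Complex (B/2) (C/2) * cis (- real n * x)"
    by (simp add: trig_def complex_eq_iff)
  moreover have "cis (of_int (int n - k1) * x + of_int (-k2) * y) = cis (real n * x) * cis (- (of_int k1 * x + of_int k2 * y))"
    unfolding cis_mult by (rule arg_cong[where f=cis]) (simp add: algebra_simps)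
  moreover have "cis (of_int (- int n - k1) * x + of_int (-k2) * y) = cis (- real n * x) * cis (- (of_int k1 * x + of_int k2 * y))"
    unfolding cis_mult by (rule arg_cong[where f=cis]) (simp add: algebra_simps)
  moreover have "cis (of_int (-k1) * x + of_int (-k2) * y) = cis (- (of_int k1 * x + of_int k2 * y))"
    by (simp add: algebra_simps)
  ultimately show ?thesis
    by (simp add: algebra_simps)
qed

lemma fcoef_trig:
  assumes "n > 0"
  shows "fcoef (trig n A B C) k =
     (if k = (0,0) then complex_of_real A else 0)
   + (if k = (int n, 0) then Complex (B/2) (-C/2) else 0)
   + (if k = (- int n, 0) then Complex (B/2) (C/2) else 0)"
proof -
  obtain k1 k2 where k: "k = (k1,k2)" by (cases k)
  define wave where "wave j l = (\<lambda>(x::real,y::real). cis (of_int j * x + of_int l * y))" for j l :: int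
  have wave_integrable: "(\<lambda>p. c * wave j l p) integrable_on cbox (0,0) (2*pi,2*pi)" for c j l
    unfolding wave_def case_prod_unfold by (intro integrable_continuous continuous_intros)
  have "(\<lambda>(x,y). complex_of_real (trig n A B C (x,y)) * cis (- (of_int k1 * x + of_int k2 * y)))
      = (\<lambda>p. complex_of_real A * wave (-k1) (-k2) p + Complex (B/2) (-C/2) * wave (int n - k1) (-k2) p
           + Complex (B/2) (C/2) * wave (- int n - k1) (-k2) p)"
    by (simp only: wave_def trig_times_cis split_def prod.case)
  then have "fcoef (trig n A B C) k = integral (cbox (0,0) (2*pi,2*pi))
        (\<lambda>p. complex_of_real A * wave (-k1) (-k2) p + Complex (B/2) (-C/2) * wave (int n - k1) (-k2) p
           + Complex (B/2) (C/2) * wave (- int n - k1) (-k2) p) / complex_of_real (4 * pi^2)"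
    unfolding fcoef_def k fst_conv snd_conv by simp
  also have "\<dots> = (complex_of_real A * integral (cbox (0,0) (2*pi,2*pi)) (wave (-k1) (-k2))
        + Complex (B/2) (-C/2) * integral (cbox (0,0) (2*pi,2*pi)) (wave (int n - k1) (-k2))
        + Complex (B/2) (C/2) * integral (cbox (0,0) (2*pi,2*pi)) (wave (- int n - k1) (-k2)))
        / complex_of_real (4 * pi^2)"
    by (simp add: integral_add integrable_add wave_integrable integral_mult_right)
  also have "\<dots> = (if k = (0,0) then complex_of_real A else 0)
   + (if k = (int n, 0) then Complex (B/2) (-C/2) else 0)
   + (if k = (- int n, 0) then Complex (B/2) (C/2) else 0)"
    unfolding wave_def integral_cis_torus k using assms by (auto simp: field_simps)
  finally show ?thesis .
qed

lemma has_sum_Hs_trig: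
  assumes "n > 0"
  shows "((\<lambda>k. sob_weight s k * (cmod (fcoef (trig n A B C) k))^2)
           has_sum A^2 + (1 + real n ^ 2) powr s * (B^2 + C^2) / 2) UNIV"
proof -
  define f where "f k = sob_weight s k * (cmod (fcoef (trig n A B C) k))^2" for k
  define F where "F = {(0::int, 0::int), (int n, 0), (- int n, 0)}"
  have "f k = 0" if "k \<notin> F" for k
    using that unfolding f_def fcoef_trig[OF assms] F_def by auto
  then have "(f has_sum (\<Sum>k\<in>F. f k)) UNIV"
    by (intro has_sum_finite_neutralI) (auto simp: F_def)
  moreover have "(\<Sum>k\<in>F. f k) = A^2 + (1 + real n ^ 2) powr s * (B^2 + C^2) / 2"
  proof -
    have cmod_sq: "(cmod (Complex a b))^2 = a^2 + b^2" for a b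
      by (simp add: cmod_def)
    have "f (0,0) = A^2"
      using assms by (simp add: f_def fcoef_trig sob_weight_def)
    moreover have "f (int n, 0) = (1 + real n ^ 2) powr s * (B^2 + C^2) / 4"
      and "f (- int n, 0) = (1 + real n ^ 2) powr s * (B^2 + C^2) / 4"
      using assms by (simp_all add: f_def fcoef_trig sob_weight_def cmod_sq power_divide)
    ultimately show ?thesis
      using assms by (simp add: F_def)
  qed
  ultimately show ?thesis
    unfolding f_def by simp
qed

lemma in_Hs_trig: "n > 0 \<Longrightarrow> in_Hs s (trig n A B C)"
  unfolding in_Hs_def by (rule has_sum_imp_summable[OF has_sum_Hs_trig])

lemma Hs_sq_trig:
  "n > 0 \<Longrightarrow> Hs_sq s (trig n A B C) = 4*pi^2 * (A^2 + (1 + real n ^ 2) powr s * (B^2 + C^2) / 2)"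
  unfolding Hs_sq_def by (simp add: infsumI[OF has_sum_Hs_trig])

lemma Hs_sq_nonneg: "Hs_sq s g \<ge> 0"
  unfolding Hs_sq_def sob_weight_def by (simp add: infsum_nonneg)

lemma Hs4_nonneg: "Hs4 s U \<ge> 0"
  by (simp add: Hs4_def Hs_sq_nonneg split: prod.splits)

lemma Hs4_sub4_self: "Hs4 s (sub4 U U) = 0"
  by (simp add: Hs4_def sub4_def Hs_sq_def fcoef_def case_prod_unfold split: prod.splits)

lemma sub4_trig:
  "sub4 (trig n A1 B1 C1, trig n A2 B2 C2, trig n A3 B3 C3, trig n A4 B4 C4)
        (trig n A1' B1' C1', trig n A2' B2' C2', trig n A3' B3' C3', trig n A4' B4' C4')
   = (trig n (A1-A1') (B1-B1') (C1-C1'), trig n (A2-A2') (B2-B2') (C2-C2'),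
      trig n (A3-A3') (B3-B3') (C3-C3'), trig n (A4-A4') (B4-B4') (C4-C4'))"
  unfolding sub4_def trig_def by (auto simp: fun_eq_iff algebra_simps)

lemma pd3_const: "pd3 S (\<lambda>_. k) (\<lambda>_. 0) (\<lambda>_. 0) (\<lambda>_. 0)"
proof -
  have "(\<lambda>(a::real, b::real, c::real). 0 * a + 0 * b + 0 * c) = (\<lambda>_. 0)"
    by auto
  then show ?thesis
    unfolding pd3_def by (auto intro: has_derivative_const)
qed

lemma pd3_travelling_sine:
  "pd3 S (\<lambda>(t,x,y). e * sin (real n * (x - c * t)))
     (\<lambda>(t,x,y). - e * real n * c * cos (real n * (x - c * t)))
     (\<lambda>(t,x,y). e * real n * cos (real n * (x - c * t))) (\<lambda>_. 0)"
  unfolding pd3_def case_prod_unfold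
proof (intro conjI ballI)
  fix p :: "real \<times> real \<times> real"
  show "((\<lambda>p. e * sin (real n * (fst (snd p) - c * fst p))) has_derivative
      (\<lambda>q. - e * real n * c * cos (real n * (fst (snd p) - c * fst p)) * fst q +
          e * real n * cos (real n * (fst (snd p) - c * fst p)) * fst (snd q) + 0 * snd (snd q)))
      (at p within S)"
    by (rule has_derivative_eq_rhs, (rule derivative_eq_intros refl)+)
       (auto simp: fun_eq_iff algebra_simps)
qed (auto intro!: continuous_intros)

definition shear_flow :: "nat \<Rightarrow> real \<Rightarrow> real \<Rightarrow> sfun \<times> sfun \<times> sfun \<times> sfun" where
  "shear_flow n e c = (\<lambda>_. 1, \<lambda>_. c, \<lambda>(t,x,y). e * sin (real n * (x - c * t)), \<lambda>_. 1)"

lemma state_at_shear_flow: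
  "state_at (shear_flow n e c) t = (trig n 1 0 0, trig n c 0 0,
      trig n 0 (- e * sin (real n * c * t)) (e * cos (real n * c * t)), trig n 1 0 0)"
  unfolding state_at_def shear_flow_def slice_def trig_def
  by (auto simp: fun_eq_iff sin_diff algebra_simps)

lemma continuous_on_Hs4_dist_shear_flow:
  assumes "n > 0"
  shows "continuous_on UNIV
           (\<lambda>t'. Hs4 s (sub4 (state_at (shear_flow n e c) t') (state_at (shear_flow n e c) t)))"
  unfolding state_at_shear_flow sub4_trig Hs4_def using assms
  by (simp add: Hs_sq_trig) (intro continuous_intros)

text \<open>Since \<open>\<rho>\<close>, \<open>u\<close>, \<open>h\<close> are constant and \<open>v\<close> does not depend on \<open>y\<close>, every term of the system
  vanishes except \<open>v\<^sub>t + u v\<^sub>x\<close>, which is zero because \<open>v\<close> is transported with speed \<open>u = c\<close>.\<close>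

lemma gas_sol_shear_flow:
  assumes "n > 0"
  shows "gas_sol s \<gamma> T (shear_flow n e c)"
proof -
  define v :: sfun where "v = (\<lambda>(t,x,y). e * sin (real n * (x - c * t)))"
  define vt :: sfun where "vt = (\<lambda>(t,x,y). - e * real n * c * cos (real n * (x - c * t)))"
  define vx :: sfun where "vx = (\<lambda>(t,x,y). e * real n * cos (real n * (x - c * t)))"
  define S where "S = {0..T} \<times> (UNIV :: (real \<times> real) set)"
  define K where "K = {1::real} \<times> cball (0::real) \<bar>c\<bar> \<times> cball (0::real) \<bar>e\<bar> \<times> {1::real}"
  have U: "shear_flow n e c = (\<lambda>_. 1, \<lambda>_. c, v, \<lambda>_. 1)"
    by (simp add: shear_flow_def v_def)
  have "sin (real n * (x + 2*pi - c*t)) = sin (real n * (x - c*t))" for x t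
    using sin.plus_of_nat[of "real n * (x - c*t)" n] by (simp add: algebra_simps)
  then have periodic: "periodic2 T v"
    by (simp add: periodic2_def v_def)
  have pd3_v: "pd3 S v vt vx (\<lambda>_. 0)"
    unfolding v_def vt_def vx_def by (rule pd3_travelling_sine)
  have transport: "vt p + c * vx p = 0" for p
    by (simp add: vt_def vx_def case_prod_unfold)
  have const_periodic: "periodic2 T (\<lambda>_. k)" for k
    by (simp add: periodic2_def)
  have compact: "compact K" "K \<subseteq> G_space"
    by (auto simp: K_def G_space_def intro!: compact_Times)
  have range: "\<forall>p\<in>S. (1, c, v p, 1) \<in> K"
    by (auto simp: K_def v_def abs_mult mult_left_le)
  have Hs: "\<forall>t\<in>{0..T}. in_Hs4 s (state_at (shear_flow n e c) t)"
    using assms by (simp add: state_at_shear_flow in_Hs4_def in_Hs_trig)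
  have continuous: "\<forall>t\<in>{0..T}. \<forall>\<epsilon>>0. \<exists>d>0. \<forall>t'\<in>{0..T}. \<bar>t' - t\<bar> < d \<longrightarrow>
      Hs4 s (sub4 (state_at (shear_flow n e c) t') (state_at (shear_flow n e c) t)) < \<epsilon>"
  proof (intro ballI allI impI)
    fix t \<epsilon> :: real
    assume "\<epsilon> > 0"
    let ?dist = "\<lambda>t'. Hs4 s (sub4 (state_at (shear_flow n e c) t') (state_at (shear_flow n e c) t))"
    obtain d where "d > 0" "\<forall>t'. \<bar>t' - t\<bar> < d \<longrightarrow> \<bar>?dist t' - ?dist t\<bar> < \<epsilon>"
      using continuous_on_Hs4_dist_shear_flow[OF assms, of s e c t] \<open>\<epsilon> > 0\<close>
      unfolding continuous_on_iff dist_real_def by blast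
    then show "\<exists>d>0. \<forall>t'\<in>{0..T}. \<bar>t' - t\<bar> < d \<longrightarrow> ?dist t' < \<epsilon>"
      by (intro exI[of _ d]) (auto simp: Hs4_sub4_self Hs4_nonneg)
  qed
  show ?thesis
    unfolding gas_sol_def U S_def[symmetric] Let_def prod.case
    by (intro conjI exI[of _ K] periodic const_periodic compact range Hs[unfolded U]
        continuous[unfolded U])
      ((rule exI)+, (rule conjI pd3_const pd3_v ballI)+, auto simp: transport)
qed

lemma Hs4_shear_flow:
  assumes "n > 0" and "(1 + real n ^ 2) powr s * e^2 = 1"
  shows "Hs4 s (state_at (shear_flow n e c) t) = pi * sqrt (10 + 4 * c^2)"
proof -
  have "(- e * sin x)^2 + (e * cos x)^2 = e^2" for x
    by (simp add: power_mult_distrib algebra_simps flip: distrib_left)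
  then have "Hs4 s (state_at (shear_flow n e c) t) = sqrt (pi^2 * (10 + 4 * c^2))"
    using assms by (simp add: state_at_shear_flow Hs4_def Hs_sq_trig algebra_simps)
  then show ?thesis
    by (simp add: real_sqrt_mult)
qed

lemma Hs4_sub4_shear_flow_initial:
  assumes "n > 0"
  shows "Hs4 s (sub4 (state_at (shear_flow n e c) 0) (state_at (shear_flow n e c') 0)) = 2 * pi * \<bar>c - c'\<bar>"
proof -
  have "Hs4 s (sub4 (state_at (shear_flow n e c) 0) (state_at (shear_flow n e c') 0))
      = sqrt ((2 * pi * (c - c'))^2)"
    using assms by (simp add: state_at_shear_flow sub4_trig Hs4_def Hs_sq_trig power_mult_distrib)
  then show ?thesis
    by (simp add: abs_mult)
qed

lemma Hs4_sub4_shear_flow_antiphase: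
  assumes "n > 0" and "(1 + real n ^ 2) powr s * e^2 = 1"
  shows "Hs4 s (sub4 (state_at (shear_flow n e 0) 1) (state_at (shear_flow n e (pi / n)) 1))
           = 2 * pi * sqrt (2 + (pi / n)^2)"
proof -
  have "Hs4 s (sub4 (state_at (shear_flow n e 0) 1) (state_at (shear_flow n e (pi / n)) 1))
      = sqrt ((2 * pi)^2 * (2 + (pi / n)^2))"
    using assms by (simp add: state_at_shear_flow sub4_trig Hs4_def Hs_sq_trig algebra_simps)
  then show ?thesis
    by (simp add: real_sqrt_mult)
qed

lemma shear_flows_close_then_apart:
  assumes "\<delta> > 0"
  shows "\<exists>U V. gas_sol s \<gamma> 1 U \<and> gas_sol s \<gamma> 1 V \<and>
           Hs4 s (state_at U 0) \<le> pi * sqrt 14 \<and> Hs4 s (state_at V 0) \<le> pi * sqrt 14 \<and>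
           Hs4 s (sub4 (state_at U 0) (state_at V 0)) < \<delta> \<and>
           (\<exists>t\<in>{0..1}. Hs4 s (sub4 (state_at U t) (state_at V t)) \<ge> 2 * pi * sqrt 2)"
proof -
  obtain n :: nat where "max 4 (2 * pi^2 / \<delta>) < n"
    using reals_Archimedean2 by blast
  then have n_pos: "n > 0" and "pi / n \<le> 1" and gap: "2 * pi * (pi / n) < \<delta>"
    using pi_less_4 assms by (auto simp: field_simps power2_eq_square)
  then have "(pi / n)^2 \<le> 1"
    by (simp add: power_le_one)
  then have sqrt_bounds: "sqrt (10 + 4 * (pi / n)^2) \<le> sqrt 14" "sqrt 2 \<le> sqrt (2 + (pi / n)^2)"
    by simp_all
  define e where "e = (1 + real n ^ 2) powr (- s / 2)"
  have unit: "(1 + real n ^ 2) powr s * e^2 = 1"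
    unfolding e_def by (rule powr_times_square_powr_neg_half) (simp add: add_pos_nonneg)
  show ?thesis
    using n_pos gap sqrt_bounds
    by (intro exI[of _ "shear_flow n e 0"] exI[of _ "shear_flow n e (pi / n)"] conjI bexI[of _ 1])
      (simp_all add: gas_sol_shear_flow Hs4_shear_flow[OF n_pos unit] Hs4_sub4_shear_flow_initial
        Hs4_sub4_shear_flow_antiphase[OF n_pos unit])
qed

theorem theorem1:
  fixes s \<gamma> :: real
  assumes "s > 2" and "\<gamma> > 1"
  shows "\<exists>T>0. \<exists>R>0. \<exists>\<epsilon>>0. \<forall>\<delta>>0. \<exists>U V.
           gas_sol s \<gamma> T U \<and> gas_sol s \<gamma> T V \<and>
           Hs4 s (state_at U 0) \<le> R \<and> Hs4 s (state_at V 0) \<le> R \<and>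
           Hs4 s (sub4 (state_at U 0) (state_at V 0)) < \<delta> \<and>
           (\<exists>t\<in>{0..T}. Hs4 s (sub4 (state_at U t) (state_at V t)) \<ge> \<epsilon>)"
  by (intro exI[of _ 1] exI[of _ "pi * sqrt 14"] exI[of _ "2 * pi * sqrt 2"] conjI allI impI
      shear_flows_close_then_apart) simp_all

end
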